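(* Let $0<\alpha<\beta$ and $t\ge1$. Define $\mathcal{P}_t''$ to be the set of real polynomials $f$ of degree at most $t$ such that $f(0)=0$, $f$ is $t$-equioscillatory on $[0,\alpha]$, and $f(\beta)=1$. Then the problem \[ \min_{f\in\mathcal{P}_t''}\ \max_{\lambda\in[0,\alpha]}|f(\lambda)| \] is solved by \[ f_t^\star(\lambda)=\prod_{s=0}^{t-1}\frac{\lambda-r_{s,t}}{\beta-r_{s,t}},\qquad r_{s,t}:=\alpha\,\frac{\cos\!\big(\frac{\pi(s+1/2)}{t}\big)+\cos\!\big(\frac{\pi}{2t}\big)}{1+\cos\!\big(\frac{\pi}{2t}\big)}; \] that is, $f_t^\star\in\mathcal{P}_t''$ and $\max_{[0,\alpha]}|f_t^\star|\le\max_{[0,\alpha]}|g|$ for every $g\in\mathcal{P}_t''$.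
   Context: A polynomial $f$ is called $t$-equioscillatory on an interval $[a,b]$ if there exist points $a\le\gamma_0<\gamma_1<\dots<\gamma_{t-1}\le b$ such that $|f(\gamma_s)|=\max_{\lambda\in[a,b]}|f(\lambda)|$ for all $0\le s\le t-1$ and $f(\gamma_0)=-f(\gamma_1)=f(\gamma_2)=-f(\gamma_3)=\cdots$. *)

theory Defs
  imports "HOL-Analysis.Analysis" "HOL-Computational_Algebra.Polynomial"
begin

definition supnorm_on :: "real \<Rightarrow> real \<Rightarrow> real poly \<Rightarrow> real" where
  "supnorm_on a b f = (SUP x\<in>{a..b}. \<bar>poly f x\<bar>)"

definition equiosc :: "nat \<Rightarrow> real \<Rightarrow> real \<Rightarrow> real poly \<Rightarrow> bool" where
  "equiosc t a b f \<longleftrightarrow>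
     (\<exists>\<gamma> :: nat \<Rightarrow> real.
        (\<forall>s<t. a \<le> \<gamma> s \<and> \<gamma> s \<le> b) \<and>
        (\<forall>s. Suc s < t \<longrightarrow> \<gamma> s < \<gamma> (Suc s)) \<and>
        (\<forall>s<t. \<bar>poly f (\<gamma> s)\<bar> = supnorm_on a b f) \<and>
        (\<forall>s<t. poly f (\<gamma> s) = (-1) ^ s * poly f (\<gamma> 0)))"

definition P_t2 :: "real \<Rightarrow> real \<Rightarrow> nat \<Rightarrow> real poly set" where
  "P_t2 \<alpha> \<beta> t = {f. degree f \<le> t \<and> poly f 0 = 0 \<and> equiosc t 0 \<alpha> f \<and> poly f \<beta> = 1}"

definition r_node :: "real \<Rightarrow> nat \<Rightarrow> nat \<Rightarrow> real" where
  "r_node \<alpha> s t = \<alpha> * (cos (pi * (real s + 1/2) / real t) + cos (pi / (2 * real t)))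
                         / (1 + cos (pi / (2 * real t)))"

definition f_star :: "real \<Rightarrow> real \<Rightarrow> nat \<Rightarrow> real poly" where
  "f_star \<alpha> \<beta> t = (\<Prod>s<t. smult (1 / (\<beta> - r_node \<alpha> s t)) [:- r_node \<alpha> s t, 1:])"

end

theory Submission
  imports Defs
begin

text \<open>
  With \<open>c = cos (\<pi> / 2t)\<close> and \<open>a = \<alpha> / (1 + c)\<close>, the nodes \<open>r\<^sub>s\<^sub>,\<^sub>t\<close> are the images
  \<open>a (y\<^sub>s + c)\<close> of the zeros \<open>y\<^sub>s\<close> of the Chebyshev polynomial \<open>T\<^sub>t\<close>, so \<open>f\<^sub>t\<^sup>\<star>(x)\<close> is a
  constant multiple of \<open>T\<^sub>t(x/a - c)\<close>. The substitution maps \<open>[0, \<alpha>]\<close> onto \<open>[-c, 1]\<close> and \<open>0\<close>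
  to the smallest zero \<open>-c\<close> of \<open>T\<^sub>t\<close>; on \<open>[-c, 1]\<close> the polynomial \<open>T\<^sub>t\<close> attains \<open>\<plusminus>1\<close>
  alternately at \<open>t\<close> points, so \<open>f\<^sub>t\<^sup>\<star>\<close> is \<open>t\<close>-equioscillatory.
  If some \<open>g\<close> of the class had a smaller maximum on \<open>[0, \<alpha>]\<close>, then \<open>f\<^sub>t\<^sup>\<star> - g\<close> would change
  sign between consecutive equioscillation points, giving \<open>t - 1\<close> zeros in \<open>(0, \<alpha>)\<close>; with the
  common values at \<open>0\<close> and \<open>\<beta>\<close> these are \<open>t + 1\<close> zeros of a polynomial of degree at most \<open>t\<close>,
  so \<open>g = f\<^sub>t\<^sup>\<star>\<close>, contradicting the strict inequality.
\<close>

section \<open>Chebyshev polynomials\<close>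

fun cheb_poly :: "nat \<Rightarrow> real poly" where
  "cheb_poly 0 = 1"
| "cheb_poly (Suc 0) = [:0, 1:]"
| "cheb_poly (Suc (Suc n)) = [:0, 2:] * cheb_poly (Suc n) - cheb_poly n"

lemma poly_cheb_poly_cos: "poly (cheb_poly n) (cos x) = cos (real n * x)"
proof (induction n rule: cheb_poly.induct)
  case (3 n)
  have "cos (real (Suc (Suc n)) * x) = cos (real (Suc n) * x + x)"
    and "cos (real n * x) = cos (real (Suc n) * x - x)"
    by (simp_all add: algebra_simps)
  then show ?case
    using "3" by (simp only: cheb_poly.simps poly_diff cos_add cos_diff) (simp add: algebra_simps)
qed simp_all

lemma abs_poly_cheb_poly_le_1:
  assumes "\<bar>y\<bar> \<le> 1"
  shows "\<bar>poly (cheb_poly n) y\<bar> \<le> 1"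
  using poly_cheb_poly_cos[of n "arccos y"] assms by simp

lemma degree_cheb_poly_le: "degree (cheb_poly n) \<le> n"
proof (induction n rule: cheb_poly.induct)
  case (3 n)
  then show ?case
    by (auto intro!: order.trans[OF degree_diff_le_max] order.trans[OF degree_mult_le])
qed simp_all

lemma coeff_cheb_poly_degree: "coeff (cheb_poly n) n = 2 ^ (n - 1)"
proof (induction n rule: cheb_poly.induct)
  case (3 n)
  have "coeff (cheb_poly n) (Suc (Suc n)) = 0"
    using degree_cheb_poly_le[of n] by (intro coeff_eq_0) simp
  then show ?case using "3" by (cases n) simp_all
qed simp_all

definition cheb_node :: "nat \<Rightarrow> nat \<Rightarrow> real" where
  "cheb_node t s = cos (pi * (real s + 1/2) / real t)"

lemma poly_cheb_poly_cheb_node: "s < t \<Longrightarrow> poly (cheb_poly t) (cheb_node t s) = 0"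
proof -
  assume "s < t"
  then have "real t * (pi * (real s + 1/2) / real t) = real s * pi + pi / 2"
    by (simp add: field_simps)
  then show ?thesis by (simp add: cheb_node_def poly_cheb_poly_cos cos_add)
qed

lemma inj_on_cheb_node: "inj_on (cheb_node t) {..<t}"
proof (rule inj_onI)
  fix i j assume "i \<in> {..<t}" "j \<in> {..<t}" and eq: "cheb_node t i = cheb_node t j"
  have angle: "0 \<le> pi * (real s + 1/2) / real t \<and> pi * (real s + 1/2) / real t \<le> pi"
    if "s \<in> {..<t}" for s
  proof -
    have "real s + 1/2 \<le> real t" using that by simp
    then have "pi * (real s + 1/2) \<le> pi * real t" by simp
    then show ?thesis using that by (simp add: field_simps)
  qed
  have "pi * (real i + 1/2) / real t = pi * (real j + 1/2) / real t"
    using angle[OF \<open>i \<in> {..<t}\<close>] angle[OF \<open>j \<in> {..<t}\<close>] eq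
    unfolding cheb_node_def by (blast intro: cos_inj_pi)
  then show "i = j" using \<open>i \<in> {..<t}\<close> by (simp add: field_simps)
qed

lemma cheb_poly_eq_prod_cheb_node:
  assumes "1 \<le> t"
  shows "cheb_poly t = smult (2 ^ (t - 1)) (\<Prod>s<t. [:- cheb_node t s, 1:])"
proof (rule poly_eqI_degree_lead_coeff)
  have "degree (\<Prod>s<t. [:- cheb_node t s, 1:]) = t"
    by (subst degree_prod_sum_eq) auto
  moreover have "lead_coeff (\<Prod>s<t. [:- cheb_node t s, 1:]) = 1"
    by (simp add: lead_coeff_prod)
  ultimately show "coeff (cheb_poly t) t = coeff (smult (2 ^ (t - 1)) (\<Prod>s<t. [:- cheb_node t s, 1:])) t"
    and "degree (smult (2 ^ (t - 1)) (\<Prod>s<t. [:- cheb_node t s, 1:])) \<le> t"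
    by (simp_all add: coeff_cheb_poly_degree)
  show "degree (cheb_poly t) \<le> t" by (rule degree_cheb_poly_le)
  show "t \<le> card (cheb_node t ` {..<t})"
    by (simp add: card_image inj_on_cheb_node)
  show "poly (cheb_poly t) z = poly (smult (2 ^ (t - 1)) (\<Prod>s<t. [:- cheb_node t s, 1:])) z"
    if "z \<in> cheb_node t ` {..<t}" for z
    using that by (auto simp: poly_cheb_poly_cheb_node poly_prod)
qed

definition cheb_extremum :: "nat \<Rightarrow> nat \<Rightarrow> real" where
  "cheb_extremum t s = - cos (real (Suc s) * pi / real t)"

lemma poly_cheb_poly_cheb_extremum:
  assumes "1 \<le> t"
  shows "poly (cheb_poly t) (cheb_extremum t s) = (- 1) ^ (t + Suc s)"
proof -
  define k where "k = Suc s"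
  have "real t * (pi - real k * pi / real t) = real t * pi - real k * pi"
    using assms by (simp add: field_simps)
  then have "poly (cheb_poly t) (cos (pi - real k * pi / real t)) = cos (real t * pi - real k * pi)"
    by (simp only: poly_cheb_poly_cos)
  then show ?thesis unfolding cheb_extremum_def k_def[symmetric] by (simp add: cos_diff power_add)
qed

lemma Suc_mult_pi_div_bounds:
  assumes "s < t"
  shows "pi / (2 * real t) \<le> real (Suc s) * pi / real t" and "real (Suc s) * pi / real t \<le> pi"
proof -
  have "1 * pi \<le> real (Suc s) * pi" "real (Suc s) * pi \<le> real t * pi"
    using assms by (intro mult_right_mono; simp)+
  then show "pi / (2 * real t) \<le> real (Suc s) * pi / real t" "real (Suc s) * pi / real t \<le> pi"
    using assms by (simp_all add: field_simps)
qed

lemma cos_pi_div_double_nonneg: "0 \<le> cos (pi / (2 * real t))"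
proof (rule cos_ge_zero)
  show "- (pi / 2) \<le> pi / (2 * real t)"
    by (rule order.trans[of _ 0]) simp_all
  show "pi / (2 * real t) \<le> pi / 2"
  proof (cases "t = 0")
    case False
    then show ?thesis by (intro divide_left_mono) auto
  qed simp
qed

lemma cheb_extremum_bounds:
  assumes "s < t"
  shows "- cos (pi / (2 * real t)) \<le> cheb_extremum t s" and "cheb_extremum t s \<le> 1"
proof -
  have "cos (real (Suc s) * pi / real t) \<le> cos (pi / (2 * real t))"
    using Suc_mult_pi_div_bounds[OF assms] by (intro cos_monotone_0_pi_le) simp_all
  then show "- cos (pi / (2 * real t)) \<le> cheb_extremum t s" unfolding cheb_extremum_def by simp
  show "cheb_extremum t s \<le> 1" unfolding cheb_extremum_def by simp
qed

lemma cheb_extremum_increasing: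
  assumes "Suc s < t"
  shows "cheb_extremum t s < cheb_extremum t (Suc s)"
proof -
  have "0 \<le> real (Suc s) * pi / real t" by simp
  moreover have "real (Suc s) * pi / real t < real (Suc (Suc s)) * pi / real t"
    using assms by (simp add: divide_strict_right_mono)
  ultimately have "cos (real (Suc (Suc s)) * pi / real t) < cos (real (Suc s) * pi / real t)"
    using Suc_mult_pi_div_bounds(2)[OF assms] by (rule cos_monotone_0_pi)
  then show ?thesis unfolding cheb_extremum_def by simp
qed

section \<open>Maximum norm and equioscillation\<close>

lemma supnorm_on_upper:
  fixes f :: "real poly"
  assumes "x \<in> {a..b}"
  shows "\<bar>poly f x\<bar> \<le> supnorm_on a b f"
  unfolding supnorm_on_def
proof (rule cSUP_upper[OF assms])
  show "bdd_above ((\<lambda>x. \<bar>poly f x\<bar>) ` {a..b})"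
    by (intro bounded_imp_bdd_above compact_imp_bounded compact_continuous_image continuous_intros)
      auto
qed

lemma supnorm_on_eqI:
  fixes f :: "real poly"
  assumes "\<And>x. x \<in> {a..b} \<Longrightarrow> \<bar>poly f x\<bar> \<le> M" and "x\<^sub>0 \<in> {a..b}" and "\<bar>poly f x\<^sub>0\<bar> = M"
  shows "supnorm_on a b f = M"
proof (rule antisym)
  show "supnorm_on a b f \<le> M"
    unfolding supnorm_on_def using assms(1,2) by (intro cSUP_least) auto
  show "M \<le> supnorm_on a b f"
    using supnorm_on_upper[OF assms(2), of f] assms(3) by simp
qed

lemma equiosc_scaled_cheb_poly:
  fixes f :: "real poly"
  assumes "1 \<le> t" and "0 < a"
    and f: "\<And>x. poly f x = K * poly (cheb_poly t) (x / a - cos (pi / (2 * real t)))"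
  shows "equiosc t 0 (a * (1 + cos (pi / (2 * real t)))) f"
proof -
  define c where "c = cos (pi / (2 * real t))"
  define \<gamma> where "\<gamma> s = a * (cheb_extremum t s + c)" for s
  have \<gamma>_range: "\<gamma> s \<in> {0..a * (1 + c)}" if "s < t" for s
    using cheb_extremum_bounds[OF that] assms(2) unfolding \<gamma>_def c_def by simp
  have \<gamma>_increasing: "\<gamma> s < \<gamma> (Suc s)" if "Suc s < t" for s
    using cheb_extremum_increasing[OF that] assms(2) unfolding \<gamma>_def by simp
  have \<gamma>_value: "poly f (\<gamma> s) = K * (- 1) ^ (t + Suc s)" for s
  proof -
    have "\<gamma> s / a - c = cheb_extremum t s" unfolding \<gamma>_def using assms(2) by simp
    then show ?thesis unfolding f c_def[symmetric] by (simp only: poly_cheb_poly_cheb_extremum[OF assms(1)])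
  qed
  have bound: "\<bar>poly f x\<bar> \<le> \<bar>K\<bar>" if "x \<in> {0..a * (1 + c)}" for x
  proof -
    have "0 \<le> x / a" and "x / a \<le> 1 + c"
      using that assms(2) by (simp_all add: pos_divide_le_eq mult.commute)
    moreover have "0 \<le> c" and "c \<le> 1" unfolding c_def by (simp_all add: cos_pi_div_double_nonneg)
    ultimately have "\<bar>x / a - c\<bar> \<le> 1" by linarith
    then show ?thesis
      unfolding f c_def[symmetric] abs_mult by (simp add: mult_left_le abs_poly_cheb_poly_le_1)
  qed
  have supnorm: "supnorm_on 0 (a * (1 + c)) f = \<bar>K\<bar>"
    using bound \<gamma>_range[of 0] assms(1) by (intro supnorm_on_eqI) (auto simp: \<gamma>_value abs_mult)
  show ?thesis
    unfolding equiosc_def c_def[symmetric]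
  proof (intro exI[of _ \<gamma>] conjI allI impI)
    fix s assume "s < t"
    then show "0 \<le> \<gamma> s" "\<gamma> s \<le> a * (1 + c)" using \<gamma>_range by auto
    show "\<bar>poly f (\<gamma> s)\<bar> = supnorm_on 0 (a * (1 + c)) f"
      unfolding supnorm \<gamma>_value by (simp add: abs_mult)
    show "poly f (\<gamma> s) = (- 1) ^ s * poly f (\<gamma> 0)"
      unfolding \<gamma>_value by (simp add: power_add)
  next
    fix s assume "Suc s < t"
    then show "\<gamma> s < \<gamma> (Suc s)" by (rule \<gamma>_increasing)
  qed
qed

lemma strict_mono_on_lessThanI:
  fixes f :: "nat \<Rightarrow> 'a::order"
  assumes "\<And>s. Suc s < n \<Longrightarrow> f s < f (Suc s)"
  shows "strict_mono_on {..<n} f"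
proof (rule strict_mono_onI)
  fix i j :: nat
  assume "i \<in> {..<n}" "j \<in> {..<n}" "i < j"
  then show "f i < f j"
  proof (induction j)
    case (Suc j)
    then show ?case using assms[of j] by (cases "i = j") (auto intro: order.strict_trans)
  qed simp
qed

lemma sign_changes_imp_roots:
  fixes p :: "real poly"
  assumes range: "\<And>s. s < t \<Longrightarrow> \<gamma> s \<in> {a..b}"
    and increasing: "\<And>s. Suc s < t \<Longrightarrow> \<gamma> s < \<gamma> (Suc s)"
    and sign_change: "\<And>s. Suc s < t \<Longrightarrow> poly p (\<gamma> s) * poly p (\<gamma> (Suc s)) < 0"
  obtains Z where "finite Z" "card Z = t - 1" "Z \<subseteq> {a<..<b}" "\<And>z. z \<in> Z \<Longrightarrow> poly p z = 0"
proof -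
  have "\<forall>s. \<exists>x. Suc s < t \<longrightarrow> \<gamma> s < x \<and> x < \<gamma> (Suc s) \<and> poly p x = 0"
    using poly_IVT[OF increasing sign_change] by blast
  then obtain z where z: "\<And>s. Suc s < t \<Longrightarrow> \<gamma> s < z s \<and> z s < \<gamma> (Suc s) \<and> poly p (z s) = 0"
    by metis
  have z_range: "z s \<in> {a<..<b}" if "s < t - 1" for s
  proof -
    have "Suc s < t" using that by simp
    then have "a \<le> \<gamma> s" and "\<gamma> (Suc s) \<le> b" using range[of s] range[of "Suc s"] by auto
    then show ?thesis using z[OF \<open>Suc s < t\<close>] by auto
  qed
  have "strict_mono_on {..<t - 1} z"
  proof (rule strict_mono_on_lessThanI)
    fix s assume "Suc s < t - 1"
    then have "z s < \<gamma> (Suc s)" and "\<gamma> (Suc s) < z (Suc s)" using z[of s] z[of "Suc s"] by auto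
    then show "z s < z (Suc s)" by (rule order.strict_trans)
  qed
  then have "card (z ` {..<t - 1}) = t - 1"
    by (simp add: card_image strict_mono_on_imp_inj_on)
  moreover have "z ` {..<t - 1} \<subseteq> {a<..<b}"
    using z_range by blast
  moreover have "poly p x = 0" if "x \<in> z ` {..<t - 1}" for x
    using that z by (auto simp: less_diff_conv)
  ultimately show thesis by (intro that) auto
qed

lemma equiosc_diff_sign_changes:
  fixes f g :: "real poly"
  assumes "equiosc t a b f" and "supnorm_on a b g < supnorm_on a b f"
  obtains \<gamma> where "\<And>s. s < t \<Longrightarrow> \<gamma> s \<in> {a..b}" and "\<And>s. Suc s < t \<Longrightarrow> \<gamma> s < \<gamma> (Suc s)"
    and "\<And>s. Suc s < t \<Longrightarrow> poly (f - g) (\<gamma> s) * poly (f - g) (\<gamma> (Suc s)) < 0"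
proof -
  obtain \<gamma> where \<gamma>_range: "\<And>s. s < t \<Longrightarrow> \<gamma> s \<in> {a..b}"
    and \<gamma>_increasing: "\<And>s. Suc s < t \<Longrightarrow> \<gamma> s < \<gamma> (Suc s)"
    and \<gamma>_max: "\<And>s. s < t \<Longrightarrow> \<bar>poly f (\<gamma> s)\<bar> = supnorm_on a b f"
    and \<gamma>_alternating: "\<And>s. s < t \<Longrightarrow> poly f (\<gamma> s) = (- 1) ^ s * poly f (\<gamma> 0)"
    using assms(1) unfolding equiosc_def atLeastAtMost_iff by blast
  have f_dominates: "\<bar>poly g (\<gamma> s)\<bar> < \<bar>poly f (\<gamma> s)\<bar>" if "s < t" for s
    using supnorm_on_upper[OF \<gamma>_range[OF that], of g] \<gamma>_max[OF that] assms(2) by simp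
  have same_sign: "0 < poly (f - g) (\<gamma> s) * poly f (\<gamma> s)" if "s < t" for s
    using f_dominates[OF that]
    by (cases "0 < poly f (\<gamma> s)") (auto simp: abs_less_iff abs_if zero_less_mult_iff split: if_splits)
  have "poly (f - g) (\<gamma> s) * poly (f - g) (\<gamma> (Suc s)) < 0" if "Suc s < t" for s
  proof -
    have "poly f (\<gamma> s) * poly f (\<gamma> (Suc s)) = - (poly f (\<gamma> 0))\<^sup>2"
      using \<gamma>_alternating[of s] \<gamma>_alternating[of "Suc s"] that
      by (simp add: power2_eq_square algebra_simps)
    moreover have "poly f (\<gamma> 0) \<noteq> 0" using f_dominates[of 0] that by auto
    ultimately have "poly f (\<gamma> s) * poly f (\<gamma> (Suc s)) < 0" by simp
    with same_sign[of s] same_sign[of "Suc s"] that show ?thesis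
      by (metis Suc_lessD mult_less_0_iff order_less_imp_not_less zero_less_mult_iff)
  qed
  with \<gamma>_range \<gamma>_increasing show thesis by (rule that)
qed

lemma equiosc_supnorm_minimal:
  fixes f g :: "real poly"
  assumes "equiosc t a b f" and "degree f \<le> n" and "degree g \<le> n"
    and "finite A" and "A \<inter> {a<..<b} = {}" and "\<And>x. x \<in> A \<Longrightarrow> poly f x = poly g x"
    and "n < t - 1 + card A"
  shows "supnorm_on a b f \<le> supnorm_on a b g"
proof (rule ccontr)
  assume "\<not> supnorm_on a b f \<le> supnorm_on a b g"
  then have less: "supnorm_on a b g < supnorm_on a b f" by simp
  obtain Z where "finite Z" "card Z = t - 1" "Z \<subseteq> {a<..<b}" "\<And>z. z \<in> Z \<Longrightarrow> poly (f - g) z = 0"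
    using equiosc_diff_sign_changes[OF assms(1) less] sign_changes_imp_roots by metis
  moreover have "card (Z \<union> A) = card Z + card A"
    using calculation assms(4,5) by (intro card_Un_disjoint) auto
  ultimately have "f = g"
    using assms(2,3,6,7) by (intro poly_eqI_degree[of "Z \<union> A"]) auto
  then show False using less by simp
qed

lemma r_node_eq_cheb_node:
  "r_node \<alpha> s t = \<alpha> / (1 + cos (pi / (2 * real t))) * (cheb_node t s + cos (pi / (2 * real t)))"
  unfolding r_node_def cheb_node_def by simp

lemma r_node_le:
  assumes "0 \<le> \<alpha>"
  shows "r_node \<alpha> s t \<le> \<alpha>"
proof -
  have "r_node \<alpha> s t \<le> \<alpha> / (1 + cos (pi / (2 * real t))) * (1 + cos (pi / (2 * real t)))"
    unfolding r_node_eq_cheb_node using assms cos_pi_div_double_nonneg[of t]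
    by (intro mult_left_mono) (simp_all add: cheb_node_def)
  then show ?thesis using cos_pi_div_double_nonneg[of t] by simp
qed

lemma r_node_last: "1 \<le> t \<Longrightarrow> r_node \<alpha> (t - 1) t = 0"
proof -
  assume "1 \<le> t"
  then have "pi * (real (t - 1) + 1 / 2) / real t = pi - pi / (2 * real t)"
    by (simp add: of_nat_diff field_simps)
  then show ?thesis unfolding r_node_def by simp
qed

lemma degree_f_star_le: "degree (f_star \<alpha> \<beta> t) \<le> t"
proof -
  have "degree (f_star \<alpha> \<beta> t) \<le> (\<Sum>s<t. degree (smult (1 / (\<beta> - r_node \<alpha> s t)) [:- r_node \<alpha> s t, 1:]))"
    unfolding f_star_def by (rule order.trans[OF degree_prod_sum_le]) (simp_all add: o_def)
  also have "\<dots> \<le> (\<Sum>s<t. 1)"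
    by (intro sum_mono order.trans[OF degree_smult_le]) simp
  finally show ?thesis by simp
qed

lemma poly_f_star_0: "1 \<le> t \<Longrightarrow> poly (f_star \<alpha> \<beta> t) 0 = 0"
  using r_node_last[of t \<alpha>] unfolding f_star_def poly_prod
  by (subst prod_zero_iff) (auto intro!: bexI[of _ "t - 1"])

lemma poly_f_star_beta:
  assumes "0 \<le> \<alpha>" "\<alpha> < \<beta>"
  shows "poly (f_star \<alpha> \<beta> t) \<beta> = 1"
  unfolding f_star_def poly_prod
proof (intro prod.neutral ballI)
  fix s
  have "\<beta> - r_node \<alpha> s t \<noteq> 0" using r_node_le[OF assms(1), of s t] assms(2) by simp
  then show "poly (smult (1 / (\<beta> - r_node \<alpha> s t)) [:- r_node \<alpha> s t, 1:]) \<beta> = 1"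
    by (simp add: diff_divide_distrib[symmetric])
qed

lemma poly_f_star_eq_cheb_poly:
  fixes \<alpha> \<beta> :: real
  assumes "1 \<le> t"
  defines "c \<equiv> cos (pi / (2 * real t))"
  defines "a \<equiv> \<alpha> / (1 + c)"
  assumes "a \<noteq> 0"
  shows "poly (f_star \<alpha> \<beta> t) x
           = (\<Prod>s<t. a / (\<beta> - r_node \<alpha> s t)) / 2 ^ (t - 1) * poly (cheb_poly t) (x / a - c)"
proof -
  have "poly (f_star \<alpha> \<beta> t) x = (\<Prod>s<t. a / (\<beta> - r_node \<alpha> s t) * (x / a - c - cheb_node t s))"
  proof (unfold f_star_def poly_prod, rule prod.cong)
    fix s
    have "x - r_node \<alpha> s t = a * (x / a - c - cheb_node t s)"
      using \<open>a \<noteq> 0\<close> unfolding r_node_eq_cheb_node a_def[symmetric] c_def[symmetric]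
      by (simp add: algebra_simps)
    then show "poly (smult (1 / (\<beta> - r_node \<alpha> s t)) [:- r_node \<alpha> s t, 1:]) x
        = a / (\<beta> - r_node \<alpha> s t) * (x / a - c - cheb_node t s)"
      by (simp add: diff_divide_distrib[symmetric])
  qed simp
  also have "\<dots> = (\<Prod>s<t. a / (\<beta> - r_node \<alpha> s t)) * poly (\<Prod>s<t. [:- cheb_node t s, 1:]) (x / a - c)"
    unfolding poly_prod prod.distrib[symmetric] by simp
  finally show ?thesis
    by (simp add: cheb_poly_eq_prod_cheb_node[OF assms(1)])
qed

lemma equiosc_f_star:
  assumes "0 < \<alpha>" and "1 \<le> t"
  shows "equiosc t 0 \<alpha> (f_star \<alpha> \<beta> t)"
proof -
  define c where "c = cos (pi / (2 * real t))"
  define a where "a = \<alpha> / (1 + c)"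
  have "0 \<le> c" unfolding c_def by (rule cos_pi_div_double_nonneg)
  then have "0 < a" and \<alpha>_eq: "\<alpha> = a * (1 + c)" unfolding a_def using assms(1) by simp_all
  define K where "K = (\<Prod>s<t. a / (\<beta> - r_node \<alpha> s t)) / 2 ^ (t - 1)"
  have "poly (f_star \<alpha> \<beta> t) x = K * poly (cheb_poly t) (x / a - c)" for x
    using \<open>0 < a\<close> unfolding K_def a_def c_def by (intro poly_f_star_eq_cheb_poly[OF assms(2)]) linarith
  then have "equiosc t 0 (a * (1 + c)) (f_star \<alpha> \<beta> t)"
    unfolding c_def by (intro equiosc_scaled_cheb_poly[OF assms(2) \<open>0 < a\<close>])
  then show ?thesis unfolding \<alpha>_eq[symmetric] .
qed

theorem lemma4:
  fixes \<alpha> \<beta> :: real and t :: nat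
  assumes "0 < \<alpha>" and "\<alpha> < \<beta>" and "1 \<le> t"
  shows "f_star \<alpha> \<beta> t \<in> P_t2 \<alpha> \<beta> t \<and>
         (\<forall>g \<in> P_t2 \<alpha> \<beta> t. supnorm_on 0 \<alpha> (f_star \<alpha> \<beta> t) \<le> supnorm_on 0 \<alpha> g)"
proof (intro conjI ballI)
  have equiosc: "equiosc t 0 \<alpha> (f_star \<alpha> \<beta> t)"
    using assms(1,3) by (rule equiosc_f_star)
  have f_star_0: "poly (f_star \<alpha> \<beta> t) 0 = 0" and f_star_\<beta>: "poly (f_star \<alpha> \<beta> t) \<beta> = 1"
    using assms by (simp_all add: poly_f_star_0 poly_f_star_beta)
  show "f_star \<alpha> \<beta> t \<in> P_t2 \<alpha> \<beta> t"
    unfolding P_t2_def using degree_f_star_le equiosc f_star_0 f_star_\<beta> by simp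
  fix g assume "g \<in> P_t2 \<alpha> \<beta> t"
  then show "supnorm_on 0 \<alpha> (f_star \<alpha> \<beta> t) \<le> supnorm_on 0 \<alpha> g"
    unfolding P_t2_def using assms f_star_0 f_star_\<beta>
    by (intro equiosc_supnorm_minimal[OF equiosc degree_f_star_le, of g "{0, \<beta>}"]) auto
qed

end
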